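(* Let $\mathbf Y$ be a process with paths in $\bar C^-[0,1]=\{f\in C[0,1]:f\le0\}$, let $\mathbf V$ be a standard generalized Pareto process with $D$-norm $\|\cdot\|_D$, and let $\boldsymbol\eta$ be a standard max-stable process with $P(\boldsymbol\eta\le f)=\exp(-\|f\|_D)$, $f\in\bar E^-[0,1]$. (i) If $\mathbf Y$ is in the spectral $\delta$-neighborhood of $\mathbf V$ for some $\delta\in(0,1]$, then \[ \sup_{f\in\bar E^-[0,1]}\Big|P\Big(\mathbf Y\le \frac fn\Big)^n-P(\boldsymbol\eta\le f)\Big|=O(n^{-\delta}). \] (ii) Suppose that for every $f\in\bar E_1^-[0,1]$ the function $H_f(c)=P(\mathbf Y\le c|f|)$ is differentiable in $c\in(-\varepsilon,0)$ for some $\varepsilon>0$, with derivative $h_f(c)$, and satisfies the von Mises condition \[ \frac{-c\,h_f(c)}{1-H_f(c)}=:1+r_f(c)\to 1\quad (c\uparrow 0),\qquad f\in\bar E_1^-[0,1], \] with $\sup_{f\in\bar E_1^-[0,1]}\big|\int_c^0 \frac{r_f(t)}{t}\,dt\big|\to 0$ as $c\uparrow 0$. If $\sup_{f\in\bar E^-[0,1]}|P(\mathbf Y\le f/n)^n-P(\boldsymbol\eta\le f)|=O(n^{-\delta})$ for some $\delta\in(0,1]$, then $\mathbf Y$ is in the spectral $\delta$-neighborhood of $\mathbf V$.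
   Context: $E[0,1]$: bounded functions on $[0,1]$ with finitely many discontinuities; $\bar E^-[0,1]=\{f\in E[0,1]:f\le0\}$; $\bar E_1^-[0,1]=\{f\in\bar E^-[0,1]:\|f\|_\infty=1\}$; inequalities between processes and functions are pointwise for all $t\in[0,1]$. A $D$-norm is $\|f\|_D=E(\sup_{t\in[0,1]}|f(t)|Z_t)$, $f\in E[0,1]$, for a generator process $\mathbf Z$ (continuous nonnegative paths, $\max_tZ_t=m\in[1,\infty)$ a.s., $EZ_t=1$ for all $t$). A standard max-stable process is a max-stable process with paths in $\bar C^-[0,1]$ and standard negative exponential margins. A process $\mathbf V$ with paths in $\bar C^-[0,1]$ is a standard generalized Pareto process with $D$-norm $\|\cdot\|_D$ if there is $c_0>0$ with $P(\mathbf V\le f)=1-\|f\|_D$ for all $f\in\bar E^-[0,1]$ with $\|f\|_\infty\le c_0$. A process $\mathbf Y$ in $\bar C^-[0,1]$ belongs to the spectral $\delta$-neighborhood of $\mathbf V$ ($\delta\in(0,1]$) if, uniformly for $f\in\bar E_1^-[0,1]$, $1-P(\mathbf Y\le cf)=(1-P(\mathbf V\le cf))(1+O(c^\delta))=\|f\|_D(1+O(c^\delta))$ as $c\downarrow 0$. *)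

theory Defs
  imports "HOL-Probability.Probability"
begin

text \<open>Functions on [0,1] are represented as real => real; only values on {0..1} matter.\<close>

definition E01 :: "(real \<Rightarrow> real) set" where
  "E01 = {f. bounded (f ` {0..1}) \<and>
             finite {t \<in> {0..1}. \<not> continuous (at t within {0..1}) f}}"

definition Eneg :: "(real \<Rightarrow> real) set" where
  "Eneg = {f \<in> E01. \<forall>t\<in>{0..1}. f t \<le> 0}"

definition supnorm :: "(real \<Rightarrow> real) \<Rightarrow> real" where
  "supnorm f = (SUP t\<in>{0..1}. \<bar>f t\<bar>)"

definition Eneg1 :: "(real \<Rightarrow> real) set" where
  "Eneg1 = {f \<in> Eneg. supnorm f = 1}"

definition prob_le :: "'a measure \<Rightarrow> ('a \<Rightarrow> real \<Rightarrow> real) \<Rightarrow> (real \<Rightarrow> real) \<Rightarrow> real" where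
  "prob_le M X f = measure M {\<omega> \<in> space M. \<forall>t\<in>{0..1}. X \<omega> t \<le> f t}"

definition Cneg_process :: "'a measure \<Rightarrow> ('a \<Rightarrow> real \<Rightarrow> real) \<Rightarrow> bool" where
  "Cneg_process M X \<longleftrightarrow> prob_space M \<and>
     (\<forall>t\<in>{0..1}. (\<lambda>\<omega>. X \<omega> t) \<in> borel_measurable M) \<and>
     (\<forall>\<omega>\<in>space M. continuous_on {0..1} (X \<omega>) \<and> (\<forall>t\<in>{0..1}. X \<omega> t \<le> 0))"

definition generator :: "'b measure \<Rightarrow> ('b \<Rightarrow> real \<Rightarrow> real) \<Rightarrow> bool" where
  "generator N Z \<longleftrightarrow> prob_space N \<and>
     (\<forall>t\<in>{0..1}. (\<lambda>\<omega>. Z \<omega> t) \<in> borel_measurable N \<and> integrable N (\<lambda>\<omega>. Z \<omega> t) \<and>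
                  (\<integral>\<omega>. Z \<omega> t \<partial>N) = 1) \<and>
     (\<forall>\<omega>\<in>space N. continuous_on {0..1} (Z \<omega>) \<and> (\<forall>t\<in>{0..1}. 0 \<le> Z \<omega> t)) \<and>
     (\<exists>m\<ge>1. AE \<omega> in N. (SUP t\<in>{0..1}. Z \<omega> t) = m)"

definition Dnorm :: "'b measure \<Rightarrow> ('b \<Rightarrow> real \<Rightarrow> real) \<Rightarrow> (real \<Rightarrow> real) \<Rightarrow> real" where
  "Dnorm N Z f = (\<integral>\<omega>. (SUP t\<in>{0..1}. \<bar>f t\<bar> * Z \<omega> t) \<partial>N)"

definition std_GPP :: "'c measure \<Rightarrow> ('c \<Rightarrow> real \<Rightarrow> real) \<Rightarrow> 'b measure \<Rightarrow> ('b \<Rightarrow> real \<Rightarrow> real) \<Rightarrow> bool" where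
  "std_GPP MV V N Z \<longleftrightarrow> Cneg_process MV V \<and>
     (\<exists>c0>0. \<forall>f\<in>Eneg. supnorm f \<le> c0 \<longrightarrow> prob_le MV V f = 1 - Dnorm N Z f)"

text \<open>Standard max-stable process: max-stability expressed through the distribution
  (eta =_D n max of n iid copies, i.e. P(eta <= f/n)^n = P(eta <= f)), standard
  negative exponential margins.\<close>
definition std_max_stable :: "'d measure \<Rightarrow> ('d \<Rightarrow> real \<Rightarrow> real) \<Rightarrow> bool" where
  "std_max_stable ME eta \<longleftrightarrow> Cneg_process ME eta \<and>
     (\<forall>n::nat. n \<ge> 1 \<longrightarrow> (\<forall>f\<in>Eneg. prob_le ME eta (\<lambda>t. f t / real n) ^ n = prob_le ME eta f)) \<and>
     (\<forall>t\<in>{0..1}. \<forall>x\<le>0. measure ME {\<omega> \<in> space ME. eta \<omega> t \<le> x} = exp x)"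

definition spectral_nbhd :: "'a measure \<Rightarrow> ('a \<Rightarrow> real \<Rightarrow> real) \<Rightarrow> 'c measure \<Rightarrow> ('c \<Rightarrow> real \<Rightarrow> real) \<Rightarrow> real \<Rightarrow> bool" where
  "spectral_nbhd M Y MV V \<delta> \<longleftrightarrow>
     (\<exists>K c1. c1 > 0 \<and> (\<forall>c. 0 < c \<and> c < c1 \<longrightarrow> (\<forall>f\<in>Eneg1.
        \<bar>(1 - prob_le M Y (\<lambda>t. c * f t)) - (1 - prob_le MV V (\<lambda>t. c * f t))\<bar>
          \<le> K * c powr \<delta> * (1 - prob_le MV V (\<lambda>t. c * f t)))))"

definition max_rate :: "'a measure \<Rightarrow> ('a \<Rightarrow> real \<Rightarrow> real) \<Rightarrow> 'd measure \<Rightarrow> ('d \<Rightarrow> real \<Rightarrow> real) \<Rightarrow> real \<Rightarrow> bool" where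
  "max_rate M Y ME eta \<delta> \<longleftrightarrow>
     (\<exists>K. \<forall>\<^sub>F n in sequentially. \<forall>f\<in>Eneg.
        \<bar>prob_le M Y (\<lambda>t. f t / real n) ^ n - prob_le ME eta f\<bar> \<le> K * real n powr (-\<delta>))"

definition Hf :: "'a measure \<Rightarrow> ('a \<Rightarrow> real \<Rightarrow> real) \<Rightarrow> (real \<Rightarrow> real) \<Rightarrow> real \<Rightarrow> real" where
  "Hf M Y f c = prob_le M Y (\<lambda>t. c * \<bar>f t\<bar>)"

definition rf :: "'a measure \<Rightarrow> ('a \<Rightarrow> real \<Rightarrow> real) \<Rightarrow> ((real \<Rightarrow> real) \<Rightarrow> real \<Rightarrow> real) \<Rightarrow> (real \<Rightarrow> real) \<Rightarrow> real \<Rightarrow> real" where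
  "rf M Y h f c = - c * h f c / (1 - Hf M Y f c) - 1"

definition von_mises :: "'a measure \<Rightarrow> ('a \<Rightarrow> real \<Rightarrow> real) \<Rightarrow> bool" where
  "von_mises M Y \<longleftrightarrow> (\<exists>\<epsilon>>0. \<exists>h.
     (\<forall>f\<in>Eneg1. \<forall>c\<in>{-\<epsilon><..<0}. (Hf M Y f has_real_derivative h f c) (at c)) \<and>
     (\<forall>f\<in>Eneg1. (rf M Y h f \<longlongrightarrow> 0) (at_left 0)) \<and>
     (\<forall>f\<in>Eneg1. \<forall>c\<in>{-\<epsilon><..<0}. (\<lambda>t. rf M Y h f t / t) integrable_on {c..0}) \<and>
     (\<forall>e>0. \<forall>\<^sub>F c in at_left 0. \<forall>f\<in>Eneg1.
        \<bar>integral {c..0} (\<lambda>t. rf M Y h f t / t)\<bar> \<le> e))"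

end

theory Submission
  imports Defs
begin

text \<open>
  Max-stability of \<open>\<eta>\<close> together with \<open>P(\<eta> \<le> g) = exp(-\<parallel>g\<parallel>\<^sub>D)\<close> makes the D-norm homogeneous
  under \<open>g \<mapsto> g/n\<close> and bounded below by the sup-norm, and the generalized Pareto process gives
  \<open>P(V \<le> g) = 1 - \<parallel>g\<parallel>\<^sub>D\<close> for small \<open>g\<close>. Both directions compare \<open>a = P(Y \<le> g/n)\<close> with
  \<open>b = exp(-\<parallel>g\<parallel>\<^sub>D/n)\<close>, whose \<open>n\<close>-th power is \<open>P(\<eta> \<le> g)\<close>.

  If \<open>a = 1 - y + O(c\<^sup>\<delta> y)\<close> with \<open>y = \<parallel>g/n\<parallel>\<^sub>D\<close>, then \<open>a\<close> and \<open>b\<close> are both below \<open>exp(-y/2)\<close>, so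
  \<open>|a\<^sup>n - b\<^sup>n| \<le> n exp(-ny/4) |a - b|\<close>, and the factor \<open>exp(-ny/4)\<close> absorbs the polynomial growth in
  \<open>\<parallel>g\<parallel>\<^sub>D\<close>; when \<open>\<parallel>g\<parallel>\<^sub>\<infinity>/n\<close> is not small, \<open>a\<^sup>n\<close> and \<open>b\<^sup>n\<close> are both exponentially small in \<open>n\<close>.

  Conversely, every scale \<open>c\<close> lies in \<open>[1/n, 2/n]\<close> for \<open>n = \<lceil>1/c\<rceil>\<close>, so \<open>c f = g/n\<close> with
  \<open>\<parallel>g\<parallel>\<^sub>\<infinity> \<le> 2\<close>; then \<open>b\<^sup>n\<close> is bounded away from \<open>0\<close>, which turns the rate
  \<open>|a\<^sup>n - b\<^sup>n| = O(n\<^sup>-\<^sup>\<delta>)\<close> into \<open>|a - b| = O(n\<^sup>-\<^sup>1\<^sup>-\<^sup>\<delta>) = O(c\<^sup>\<delta> y)\<close>.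
\<close>

section \<open>Sup-norm on \<open>E[0,1]\<close>\<close>

lemma bdd_above_abs_E01: "f \<in> E01 \<Longrightarrow> bdd_above ((\<lambda>t. \<bar>f t\<bar>) ` {0..1})"
  unfolding E01_def bounded_iff bdd_above_def by (auto simp: image_iff)

lemma abs_le_supnorm: "f \<in> E01 \<Longrightarrow> t \<in> {0..1} \<Longrightarrow> \<bar>f t\<bar> \<le> supnorm f"
  unfolding supnorm_def by (rule cSUP_upper) (auto intro: bdd_above_abs_E01)

lemma supnorm_nonneg: "f \<in> E01 \<Longrightarrow> 0 \<le> supnorm f"
  using abs_le_supnorm[of f 0] by force

lemma supnorm_leI: "(\<And>t. t \<in> {0..1} \<Longrightarrow> \<bar>f t\<bar> \<le> B) \<Longrightarrow> supnorm f \<le> B"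
  unfolding supnorm_def by (rule cSUP_least) auto

lemma E01_cmult:
  assumes "f \<in> E01" shows "(\<lambda>t. c * f t) \<in> E01"
proof -
  have "bounded ((\<lambda>t. c * f t) ` {0..1})"
    using assms bounded_scaling[of "f ` {0..1}" c] by (simp add: E01_def image_image)
  moreover have "{t \<in> {0..1}. \<not> continuous (at t within {0..1}) (\<lambda>t. c * f t)}
        \<subseteq> {t \<in> {0..1}. \<not> continuous (at t within {0..1}) f}"
    by (auto intro: continuous_mult continuous_const)
  ultimately show ?thesis
    using assms unfolding E01_def by (auto intro: finite_subset)
qed

lemma Eneg_cmult: "f \<in> Eneg \<Longrightarrow> 0 \<le> c \<Longrightarrow> (\<lambda>t. c * f t) \<in> Eneg"
  using E01_cmult[of f c] unfolding Eneg_def by (auto simp: mult_nonneg_nonpos)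

lemma Eneg_divide: "f \<in> Eneg \<Longrightarrow> 0 < r \<Longrightarrow> (\<lambda>t. f t / r) \<in> Eneg"
  using Eneg_cmult[of f "1/r"] by simp

lemma supnorm_cmult:
  assumes "f \<in> E01" "0 \<le> c" shows "supnorm (\<lambda>t. c * f t) = c * supnorm f"
proof (rule antisym)
  show "supnorm (\<lambda>t. c * f t) \<le> c * supnorm f"
    using assms abs_le_supnorm by (intro supnorm_leI) (auto simp: abs_mult intro: mult_left_mono)
  show "c * supnorm f \<le> supnorm (\<lambda>t. c * f t)"
  proof (cases "c = 0")
    case True
    then show ?thesis using supnorm_nonneg[OF E01_cmult[OF assms(1), of 0]] by simp
  next
    case False
    then have "supnorm f \<le> supnorm (\<lambda>t. c * f t) / c"
      using assms abs_le_supnorm[OF E01_cmult[OF assms(1), of c]]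
      by (intro supnorm_leI) (auto simp: abs_mult field_simps)
    then show ?thesis using False assms by (simp add: field_simps)
  qed
qed

lemma supnorm_divide: "f \<in> E01 \<Longrightarrow> 0 < r \<Longrightarrow> supnorm (\<lambda>t. f t / r) = supnorm f / r"
  using supnorm_cmult[of f "1/r"] by simp

lemma Eneg1_normalize:
  assumes "g \<in> Eneg" "0 < supnorm g" shows "(\<lambda>t. g t / supnorm g) \<in> Eneg1"
  using assms Eneg_divide supnorm_divide unfolding Eneg1_def Eneg_def by auto

lemma supnorm_eq_0D:
  assumes "g \<in> Eneg" "supnorm g = 0" "t \<in> {0..1}" shows "g t = 0"
  using assms abs_le_supnorm[of g t] unfolding Eneg_def by fastforce

lemma abs_power_diff_le:
  fixes a b M :: real
  assumes "0 \<le> a" "a \<le> M" "0 \<le> b" "b \<le> M"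
  shows "\<bar>a ^ n - b ^ n\<bar> \<le> real n * M ^ (n - 1) * \<bar>a - b\<bar>"
proof (induction n)
  case (Suc n)
  have "\<bar>a ^ Suc n - b ^ Suc n\<bar> = \<bar>a * (a ^ n - b ^ n) + b ^ n * (a - b)\<bar>"
    by (simp add: algebra_simps)
  also have "\<dots> \<le> a * \<bar>a ^ n - b ^ n\<bar> + b ^ n * \<bar>a - b\<bar>"
    using assms by (metis abs_mult abs_of_nonneg abs_triangle_ineq zero_le_power)
  also have "\<dots> \<le> M * (real n * M ^ (n - 1) * \<bar>a - b\<bar>) + M ^ n * \<bar>a - b\<bar>"
    using Suc assms by (intro add_mono mult_mono mult_right_mono power_mono) auto
  also have "\<dots> = real (Suc n) * M ^ (Suc n - 1) * \<bar>a - b\<bar>"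
    by (cases n) (auto simp: algebra_simps)
  finally show ?case .
qed simp

lemma power_diff_ge:
  fixes x y :: real
  assumes "0 \<le> y" "y \<le> x"
  shows "real n * y ^ (n - 1) * (x - y) \<le> x ^ n - y ^ n"
proof (induction n)
  case (Suc n)
  have "y * (real n * y ^ (n - 1) * (x - y)) + y ^ n * (x - y)
      \<le> x * (x ^ n - y ^ n) + y ^ n * (x - y)"
    using Suc assms by (intro add_right_mono mult_mono) auto
  moreover have "y * (real n * y ^ (n - 1) * (x - y)) + y ^ n * (x - y)
      = real (Suc n) * y ^ (Suc n - 1) * (x - y)"
    by (cases n) (auto simp: algebra_simps)
  ultimately show ?case by (simp add: algebra_simps)
qed simp

lemma abs_power_diff_ge:
  fixes a b :: real
  assumes "0 \<le> a" "0 \<le> b"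
  shows "real n * (min a b) ^ (n - 1) * \<bar>a - b\<bar> \<le> \<bar>a ^ n - b ^ n\<bar>"
proof (cases "b \<le> a")
  case True
  then show ?thesis using power_diff_ge[of b a n] power_mono[OF True] assms by (simp add: min_def)
next
  case False
  then show ?thesis using power_diff_ge[of a b n] power_mono[of a b n] assms by (simp add: min_def)
qed

lemma abs_exp_minus_taylor:
  fixes y :: real assumes "0 \<le> y"
  shows "\<bar>exp (- y) - (1 - y)\<bar> \<le> y\<^sup>2 / 2"
proof -
  define g where "g u = u\<^sup>2 / 2 - u + 1 - exp (- u)" for u :: real
  have "g 0 \<le> g y"
  proof (rule DERIV_nonneg_imp_nondecreasing[OF assms])
    fix u :: real
    have "(g has_real_derivative (u - 1 + exp (- u))) (at u)"
      unfolding g_def by (auto intro!: derivative_eq_intros)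
    moreover have "0 \<le> u - 1 + exp (- u)" using exp_ge_add_one_self[of "- u"] by simp
    ultimately show "\<exists>d. (g has_real_derivative d) (at u) \<and> 0 \<le> d" by blast
  qed
  then show ?thesis using exp_ge_add_one_self[of "- y"] by (simp add: g_def)
qed

lemma exp_minus_le_inverse:
  assumes "0 < (x::real)" shows "exp (- x) \<le> 1 / x"
proof -
  have "x \<le> exp x" using exp_ge_add_one_self[of x] by linarith
  then show ?thesis using assms by (simp add: exp_minus field_simps)
qed

lemma powr_le_one_plus:
  fixes s d :: real assumes "0 \<le> s" "0 < d" "d \<le> 1" shows "s powr d \<le> 1 + s"
proof (cases "s \<le> 1")
  case True
  then show ?thesis using assms powr_mono2[of d s 1] by simp
next
  case False
  then show ?thesis using assms powr_mono[of d 1 s] by simp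
qed

lemma inverse_le_powr_minus:
  fixes n d :: real assumes "1 \<le> n" "0 < d" "d \<le> 1" shows "1 / n \<le> n powr (- d)"
  using assms powr_mono[of "- 1" "- d" n] by (simp add: powr_neg_one)

lemma powr_small_bound:
  fixes K e \<delta> :: real assumes "0 \<le> K" "0 < e" "0 < \<delta>"
  obtains c1 where "0 < c1" "\<And>c. 0 \<le> c \<Longrightarrow> c \<le> c1 \<Longrightarrow> K * c powr \<delta> \<le> e"
proof
  define c1 where "c1 = (e / (K + 1)) powr (1 / \<delta>)"
  show "0 < c1" unfolding c1_def using assms by simp
  fix c :: real assume "0 \<le> c" "c \<le> c1"
  then have "K * c powr \<delta> \<le> K * c1 powr \<delta>"
    using assms by (intro mult_left_mono powr_mono2) auto
  also have "\<dots> = K * (e / (K + 1))" unfolding c1_def using assms by (simp add: powr_powr)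
  also have "\<dots> \<le> e" using assms by (simp add: field_simps)
  finally show "K * c powr \<delta> \<le> e" .
qed

lemma poly_exp_bound:
  fixes x :: real assumes "0 \<le> x"
  shows "(x + x\<^sup>2) * exp (- x / 4) \<le> 68"
proof -
  have "x \<le> 4 * exp (x / 4)" using exp_ge_add_one_self[of "x / 4"] by linarith
  moreover have "(x / 8)\<^sup>2 \<le> (exp (x / 8))\<^sup>2"
    using assms exp_ge_add_one_self[of "x / 8"] by (intro power_mono) linarith+
  then have "x\<^sup>2 \<le> 64 * exp (x / 4)"
    by (simp add: power_divide power2_eq_square flip: exp_add)
  ultimately have "(x + x\<^sup>2) * exp (- x / 4) \<le> (68 * exp (x / 4)) * exp (- x / 4)"
    by (intro mult_right_mono) auto
  also have "\<dots> = 68" by (simp flip: exp_add)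
  finally show ?thesis .
qed

lemma ceiling_inverse_bounds:
  fixes c :: real assumes "0 < c" "c \<le> 1"
  shows "1 \<le> c * real (nat \<lceil>1 / c\<rceil>)" "c * real (nat \<lceil>1 / c\<rceil>) \<le> 2"
proof -
  define n where "n = real (nat \<lceil>1 / c\<rceil>)"
  have "n = of_int \<lceil>1 / c\<rceil>" unfolding n_def using assms by simp
  then have "1 / c \<le> n" "n \<le> 1 / c + 1"
    using of_int_ceiling_le_add_one[of "1 / c"] by linarith+
  then have "1 \<le> c * n" "c * n \<le> 2"
    using assms by (auto simp: field_simps)
  then show "1 \<le> c * real (nat \<lceil>1 / c\<rceil>)" "c * real (nat \<lceil>1 / c\<rceil>) \<le> 2"
    unfolding n_def .
qed

lemma Eneg_nat_multiple:
  assumes g: "g \<in> Eneg" "0 < supnorm g" "supnorm g \<le> 1"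
  obtains n :: nat where "1 \<le> n" "1 / supnorm g \<le> real n" "1 / real n \<le> supnorm g"
    "(\<lambda>t. real n * g t) \<in> Eneg" "supnorm (\<lambda>t. real n * g t) \<le> 2"
proof
  define n where "n = nat \<lceil>1 / supnorm g\<rceil>"
  have sn: "1 \<le> supnorm g * real n" "supnorm g * real n \<le> 2"
    unfolding n_def using ceiling_inverse_bounds[OF g(2,3)] by auto
  then have "0 < real n" using g(2) zero_less_mult_pos[of "supnorm g" "real n"] by simp
  then show "1 / supnorm g \<le> real n" "1 / real n \<le> supnorm g"
    using sn(1) g(2) by (auto simp: field_simps)
  then show "1 \<le> n" using g(3) \<open>0 < real n\<close> by (simp add: field_simps)
  show "(\<lambda>t. real n * g t) \<in> Eneg" using Eneg_cmult[OF g(1)] by simp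
  show "supnorm (\<lambda>t. real n * g t) \<le> 2"
    using supnorm_cmult[of g "real n"] g(1) sn(2) unfolding Eneg_def by (simp add: mult.commute)
qed

lemma power_approx_from_linear:
  fixes a y \<epsilon> :: real
  assumes a: "0 \<le> a" "\<bar>a - (1 - y)\<bar> \<le> \<epsilon> * y" and y: "0 \<le> y" and "\<epsilon> \<le> 1 / 2" "2 \<le> n"
  shows "\<bar>a ^ n - exp (- (real n * y))\<bar> \<le> real n * exp (- (real n * y) / 4) * (\<epsilon> * y + y\<^sup>2 / 2)"
proof -
  have "a \<le> 1 - y / 2" using assms mult_right_mono[of \<epsilon> "1/2" y] by linarith
  also have "\<dots> \<le> exp (- y / 2)" using exp_ge_add_one_self[of "- y / 2"] by simp
  finally have aM: "a \<le> exp (- y / 2)" .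
  have "exp (- y / 2) ^ (n - 1) = exp (- (real (n - 1) * y / 2))"
    by (simp flip: exp_of_nat_mult)
  also have "\<dots> \<le> exp (- (real n * y) / 4)"
    using \<open>2 \<le> n\<close> y mult_right_mono[of "real n / 2" "real (n - 1)" y] by (simp add: algebra_simps)
  finally have M_pow: "exp (- y / 2) ^ (n - 1) \<le> exp (- (real n * y) / 4)" .
  have ab: "\<bar>a - exp (- y)\<bar> \<le> \<epsilon> * y + y\<^sup>2 / 2"
    using a abs_exp_minus_taylor[OF y] by linarith
  have "\<bar>a ^ n - exp (- y) ^ n\<bar> \<le> real n * exp (- y / 2) ^ (n - 1) * \<bar>a - exp (- y)\<bar>"
    using a aM y by (intro abs_power_diff_le) auto
  also have "\<dots> \<le> real n * exp (- (real n * y) / 4) * (\<epsilon> * y + y\<^sup>2 / 2)"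
    using M_pow ab by (intro mult_mono) auto
  finally show ?thesis by (simp flip: exp_of_nat_mult)
qed

lemma rate_polynomial_exp_bound:
  fixes x n \<delta> K p :: real
  assumes x: "0 \<le> x" and n: "1 \<le> n" and \<delta>: "0 < \<delta>" "\<delta> \<le> 1" and K: "0 \<le> K"
    and p: "0 \<le> p" "p \<le> (1 + x) * n powr (- \<delta>)"
  shows "exp (- x / 4) * (K * p * x + x\<^sup>2 / (2 * n)) \<le> 68 * (K + 1 / 2) * n powr (- \<delta>)"
proof -
  let ?r = "n powr (- \<delta>)"
  have "K * p * x \<le> K * ((1 + x) * ?r) * x" using K p x by (intro mult_right_mono mult_left_mono)
  moreover have "x\<^sup>2 / (2 * n) \<le> x\<^sup>2 / 2 * ?r"
    using inverse_le_powr_minus[OF n \<delta>] x mult_left_mono[of "1 / n" ?r "x\<^sup>2 / 2"] by simp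
  moreover have "0 \<le> x * ?r" using x by simp
  moreover have "(K + 1 / 2) * ?r * (x + x\<^sup>2) = K * ((1 + x) * ?r) * x + x\<^sup>2 / 2 * ?r + x * ?r / 2"
    by (simp add: algebra_simps power2_eq_square)
  ultimately have "K * p * x + x\<^sup>2 / (2 * n) \<le> (K + 1 / 2) * ?r * (x + x\<^sup>2)"
    by linarith
  then have "exp (- x / 4) * (K * p * x + x\<^sup>2 / (2 * n))
      \<le> (K + 1 / 2) * ?r * ((x + x\<^sup>2) * exp (- x / 4))"
    by (simp add: mult_left_mono mult.commute mult.left_commute)
  also have "\<dots> \<le> (K + 1 / 2) * ?r * 68"
    using K poly_exp_bound[OF x] by (intro mult_left_mono) auto
  finally show ?thesis by (simp add: mult_ac)
qed

lemma linear_approx_from_power: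
  fixes a y r C :: real
  assumes a: "0 \<le> a" and y: "0 \<le> y" and n: "1 \<le> n" "real n * y \<le> C"
    and rate: "\<bar>a ^ n - exp (- (real n * y))\<bar> \<le> r" "r \<le> exp (- C) / 2"
  shows "\<bar>a - (1 - y)\<bar> \<le> 2 * exp C * r / real n + y\<^sup>2 / 2"
proof -
  define b where "b = exp (- y)"
  have b: "0 \<le> b" "b \<le> 1" "b ^ n = exp (- (real n * y))"
    unfolding b_def using y by (simp_all flip: exp_of_nat_mult)
  have bn: "exp (- C) \<le> b ^ n" using b(3) n(2) by simp
  then have an: "exp (- C) / 2 \<le> a ^ n" using rate b(3) by linarith
  moreover have "exp (- C) / 2 \<le> b ^ n" using bn exp_gt_zero[of "- C"] by linarith
  ultimately have "exp (- C) / 2 \<le> min a b ^ n" by (simp add: min_def)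
  also have "\<dots> \<le> min a b ^ (n - 1)"
    using a b by (intro power_decreasing) auto
  finally have "real n * (exp (- C) / 2) * \<bar>a - b\<bar> \<le> real n * min a b ^ (n - 1) * \<bar>a - b\<bar>"
    by (intro mult_right_mono mult_left_mono) auto
  also have "\<dots> \<le> r" using abs_power_diff_ge[OF a b(1), of n] rate(1) b(3) by simp
  finally have "\<bar>a - b\<bar> \<le> 2 * exp C * r / real n"
    using n by (simp add: field_simps exp_minus)
  moreover have "\<bar>b - (1 - y)\<bar> \<le> y\<^sup>2 / 2" unfolding b_def by (rule abs_exp_minus_taylor[OF y])
  ultimately show ?thesis by linarith
qed

lemma linear_rate_bound:
  fixes s y C K \<delta> :: real
  assumes s: "0 < s" "s \<le> 1" "1 / real n \<le> s" and n: "1 \<le> n"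
    and \<delta>: "0 < \<delta>" "\<delta> \<le> 1" and K: "0 \<le> K" and y: "s \<le> y" "real n * y \<le> C"
  shows "2 * exp C * (K * s powr \<delta>) / real n + y\<^sup>2 / 2 \<le> (2 * exp C * K + C / 2) * s powr \<delta> * y"
proof -
  have "0 \<le> y" using s y by simp
  then have "0 \<le> C" using y(2) by (smt (verit) mult_nonneg_nonneg of_nat_0_le_iff)
  have "2 * exp C * (K * s powr \<delta>) / real n \<le> 2 * exp C * K * s powr \<delta> * y"
    using s y K \<open>0 \<le> y\<close> mult_left_mono[of "1 / real n" y "2 * exp C * K * s powr \<delta>"]
    by (simp add: mult_ac)
  moreover have "y \<le> C * s powr \<delta>"
  proof -
    have "y \<le> C * (1 / real n)" using y(2) n by (simp add: field_simps)
    also have "\<dots> \<le> C * s" using s \<open>0 \<le> C\<close> by (intro mult_left_mono) auto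
    also have "\<dots> \<le> C * s powr \<delta>"
      using s \<delta> powr_mono'[of \<delta> 1 s] \<open>0 \<le> C\<close> by (intro mult_left_mono) auto
    finally show ?thesis .
  qed
  then have "y\<^sup>2 / 2 \<le> C / 2 * s powr \<delta> * y"
    using \<open>0 \<le> y\<close> mult_right_mono[of y "C * s powr \<delta>" y] by (simp add: power2_eq_square)
  ultimately show ?thesis by (simp add: algebra_simps)
qed

lemma prob_le_nonneg [simp]: "0 \<le> prob_le M X f"
  unfolding prob_le_def by simp

lemma prob_le_eq_1:
  assumes "Cneg_process M X" "\<And>t. t \<in> {0..1} \<Longrightarrow> f t = 0"
  shows "prob_le M X f = 1"
proof -
  have "{\<omega> \<in> space M. \<forall>t\<in>{0..1}. X \<omega> t \<le> f t} = space M"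
    using assms unfolding Cneg_process_def by auto
  then show ?thesis
    using assms(1) unfolding prob_le_def Cneg_process_def by (simp add: prob_space.prob_space)
qed

text \<open>The event \<open>X \<le> g\<close> is an uncountable intersection, so it need not be measurable;
  positivity of its probability rules out the junk value \<open>0\<close> of \<open>measure\<close>.\<close>

lemma prob_le_mono:
  assumes "prob_space M" "0 < prob_le M X g" "\<And>t. t \<in> {0..1} \<Longrightarrow> f t \<le> g t"
  shows "prob_le M X f \<le> prob_le M X g"
proof -
  have "{\<omega> \<in> space M. \<forall>t\<in>{0..1}. X \<omega> t \<le> g t} \<in> sets M"
    using assms(2) measure_notin_sets unfolding prob_le_def by fastforce
  then show ?thesis
    unfolding prob_le_def using assms(3)
    by (intro finite_measure.finite_measure_mono[OF prob_space.axioms(1)[OF assms(1)]])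
      (auto intro: order_trans)
qed

section \<open>The D-norm of a standard max-stable process\<close>

locale GPP_domain =
  fixes M :: "'a measure" and Y :: "'a \<Rightarrow> real \<Rightarrow> real"
    and MV :: "'c measure" and V :: "'c \<Rightarrow> real \<Rightarrow> real"
    and N :: "'b measure" and Z :: "'b \<Rightarrow> real \<Rightarrow> real"
    and ME :: "'d measure" and eta :: "'d \<Rightarrow> real \<Rightarrow> real"
  assumes Y: "Cneg_process M Y"
    and GPP: "std_GPP MV V N Z"
    and max_stable: "std_max_stable ME eta"
    and eta_df: "\<forall>f\<in>Eneg. prob_le ME eta f = exp (- Dnorm N Z f)"
begin

lemma prob_space_M: "prob_space M"
  using Y unfolding Cneg_process_def by blast

lemma Dnorm_divide_nat:
  assumes g: "g \<in> Eneg" and n: "1 \<le> n"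
  shows "Dnorm N Z (\<lambda>t. g t / real n) = Dnorm N Z g / real n"
proof -
  have "exp (real n * - Dnorm N Z (\<lambda>t. g t / real n))
      = prob_le ME eta (\<lambda>t. g t / real n) ^ n"
    using eta_df Eneg_divide[OF g, of "real n"] n by (simp add: exp_of_nat_mult[symmetric])
  also have "\<dots> = exp (- Dnorm N Z g)"
    using max_stable g n eta_df unfolding std_max_stable_def by simp
  finally show ?thesis using n by (simp add: field_simps)
qed

lemma supnorm_le_Dnorm:
  assumes g: "g \<in> Eneg" shows "supnorm g \<le> Dnorm N Z g"
proof (rule supnorm_leI)
  fix t :: real assume t: "t \<in> {0..1}"
  have ps: "prob_space ME" and "(\<lambda>\<omega>. eta \<omega> t) \<in> borel_measurable ME"
    using max_stable t unfolding std_max_stable_def Cneg_process_def by auto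
  then have S: "{\<omega> \<in> space ME. eta \<omega> t \<le> g t} \<in> sets ME" by measurable
  have gt: "g t \<le> 0" using g t unfolding Eneg_def by auto
  have "exp (- Dnorm N Z g) = prob_le ME eta g" using eta_df g by simp
  also have "\<dots> \<le> measure ME {\<omega> \<in> space ME. eta \<omega> t \<le> g t}"
    unfolding prob_le_def using t
    by (intro finite_measure.finite_measure_mono[OF prob_space.axioms(1)[OF ps] _ S]) auto
  also have "\<dots> = exp (g t)" using max_stable t gt unfolding std_max_stable_def by blast
  finally show "\<bar>g t\<bar> \<le> Dnorm N Z g" using gt by simp
qed

lemma Dnorm_nonneg: "g \<in> Eneg \<Longrightarrow> 0 \<le> Dnorm N Z g"
  using supnorm_le_Dnorm supnorm_nonneg unfolding Eneg_def by force

lemma GPP_threshold: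
  obtains c0 where "0 < c0"
    "\<And>f. f \<in> Eneg \<Longrightarrow> supnorm f \<le> c0 \<Longrightarrow> prob_le MV V f = 1 - Dnorm N Z f"
  using GPP unfolding std_GPP_def by blast

lemma Dnorm_bounded:
  obtains C where "\<And>g. g \<in> Eneg \<Longrightarrow> supnorm g \<le> B \<Longrightarrow> Dnorm N Z g \<le> C"
proof -
  obtain c0 where c0: "0 < c0"
    "\<And>f. f \<in> Eneg \<Longrightarrow> supnorm f \<le> c0 \<Longrightarrow> prob_le MV V f = 1 - Dnorm N Z f"
    using GPP_threshold by blast
  define n where "n = nat \<lceil>B / c0\<rceil> + 1"
  have n: "1 \<le> n" "B / c0 \<le> real n" unfolding n_def by linarith+
  have "Dnorm N Z g \<le> real n" if g: "g \<in> Eneg" "supnorm g \<le> B" for g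
  proof -
    have "supnorm (\<lambda>t. g t / real n) = supnorm g / real n"
      using g n supnorm_divide unfolding Eneg_def by simp
    also have "\<dots> \<le> c0"
      using g n c0 by (simp add: field_simps)
    finally have "prob_le MV V (\<lambda>t. g t / real n) = 1 - Dnorm N Z (\<lambda>t. g t / real n)"
      using c0(2) Eneg_divide[OF g(1), of "real n"] n by simp
    then have "Dnorm N Z (\<lambda>t. g t / real n) \<le> 1"
      using prob_le_nonneg[of MV V "\<lambda>t. g t / real n"] by linarith
    then show ?thesis using Dnorm_divide_nat[OF g(1) n(1)] n by (simp add: field_simps)
  qed
  then show ?thesis using that by blast
qed

subsection \<open>Spectral neighbourhoods\<close>

text \<open>The spectral neighbourhood condition with \<open>P(V \<le> g)\<close> replaced by \<open>1 - \<parallel>g\<parallel>\<^sub>D\<close> and \<open>c f\<close>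
  by a function \<open>g\<close> of sup-norm \<open>c\<close>.\<close>

definition Dnorm_approx :: "real \<Rightarrow> real \<Rightarrow> real \<Rightarrow> bool" where
  "Dnorm_approx \<delta> K c1 \<longleftrightarrow> (\<forall>g\<in>Eneg. 0 < supnorm g \<and> supnorm g \<le> c1 \<longrightarrow>
     \<bar>prob_le M Y g - (1 - Dnorm N Z g)\<bar> \<le> K * supnorm g powr \<delta> * Dnorm N Z g)"

lemma spectral_nbhd_imp_Dnorm_approx:
  assumes "spectral_nbhd M Y MV V \<delta>"
  obtains K c1 where "0 < c1" "Dnorm_approx \<delta> K c1"
proof -
  obtain c0 where c0: "0 < c0"
    "\<And>f. f \<in> Eneg \<Longrightarrow> supnorm f \<le> c0 \<Longrightarrow> prob_le MV V f = 1 - Dnorm N Z f"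
    using GPP_threshold by blast
  obtain K c1 where "0 < c1" and spectral: "\<And>c f. 0 < c \<Longrightarrow> c < c1 \<Longrightarrow> f \<in> Eneg1 \<Longrightarrow>
      \<bar>(1 - prob_le M Y (\<lambda>t. c * f t)) - (1 - prob_le MV V (\<lambda>t. c * f t))\<bar>
        \<le> K * c powr \<delta> * (1 - prob_le MV V (\<lambda>t. c * f t))"
    using assms unfolding spectral_nbhd_def by blast
  have "Dnorm_approx \<delta> K (min (c1 / 2) c0)"
    unfolding Dnorm_approx_def
  proof (intro ballI impI)
    fix g assume g: "g \<in> Eneg" "0 < supnorm g \<and> supnorm g \<le> min (c1 / 2) c0"
    have "(\<lambda>t. supnorm g * (g t / supnorm g)) = g" using g by auto
    then show "\<bar>prob_le M Y g - (1 - Dnorm N Z g)\<bar> \<le> K * supnorm g powr \<delta> * Dnorm N Z g"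
      using spectral[of "supnorm g" "\<lambda>t. g t / supnorm g"] c0(2)[of g] g \<open>0 < c1\<close>
        Eneg1_normalize[of g] by (simp add: abs_minus_commute)
  qed
  moreover have "0 < min (c1 / 2) c0" using \<open>0 < c1\<close> c0(1) by simp
  ultimately show thesis using that by blast
qed

lemma Dnorm_approx_imp_spectral_nbhd:
  assumes "0 < c1" "Dnorm_approx \<delta> K c1"
  shows "spectral_nbhd M Y MV V \<delta>"
proof -
  obtain c0 where c0: "0 < c0"
    "\<And>f. f \<in> Eneg \<Longrightarrow> supnorm f \<le> c0 \<Longrightarrow> prob_le MV V f = 1 - Dnorm N Z f"
    using GPP_threshold by blast
  have "\<bar>(1 - prob_le M Y (\<lambda>t. c * f t)) - (1 - prob_le MV V (\<lambda>t. c * f t))\<bar>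
        \<le> K * c powr \<delta> * (1 - prob_le MV V (\<lambda>t. c * f t))"
    if c: "0 < c" "c < min c1 c0" and f: "f \<in> Eneg1" for c f
  proof -
    have cf: "(\<lambda>t. c * f t) \<in> Eneg" "supnorm (\<lambda>t. c * f t) = c"
      using f c Eneg_cmult supnorm_cmult unfolding Eneg1_def Eneg_def by auto
    then have "\<bar>prob_le M Y (\<lambda>t. c * f t) - (1 - Dnorm N Z (\<lambda>t. c * f t))\<bar>
        \<le> K * c powr \<delta> * Dnorm N Z (\<lambda>t. c * f t)"
      using assms(2) c unfolding Dnorm_approx_def by auto
    moreover have "prob_le MV V (\<lambda>t. c * f t) = 1 - Dnorm N Z (\<lambda>t. c * f t)"
      using c0(2) cf c by simp
    ultimately show ?thesis by (simp add: abs_minus_commute)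
  qed
  then show ?thesis
    unfolding spectral_nbhd_def using assms(1) c0(1) by (intro exI[of _ K] exI[of _ "min c1 c0"]) auto
qed

lemma Dnorm_approx_mono:
  assumes "Dnorm_approx \<delta> K c1" "c \<le> c1" "K \<le> K'"
  shows "Dnorm_approx \<delta> K' c"
  unfolding Dnorm_approx_def
proof (intro ballI impI)
  fix g assume g: "g \<in> Eneg" "0 < supnorm g \<and> supnorm g \<le> c"
  have "K * supnorm g powr \<delta> * Dnorm N Z g \<le> K' * supnorm g powr \<delta> * Dnorm N Z g"
    using assms(3) Dnorm_nonneg[OF g(1)] by (intro mult_right_mono) auto
  then show "\<bar>prob_le M Y g - (1 - Dnorm N Z g)\<bar> \<le> K' * supnorm g powr \<delta> * Dnorm N Z g"
    using assms(1,2) g unfolding Dnorm_approx_def by (meson order_trans)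
qed

lemma Dnorm_approx_tighten:
  assumes "0 < c0" "Dnorm_approx \<delta> K0 c0" "0 < \<delta>"
  obtains K c1 where "Dnorm_approx \<delta> K c1" "0 \<le> K" "K * c1 powr \<delta> \<le> 1 / 2" "0 < c1"
proof -
  define K where "K = \<bar>K0\<bar>"
  have K: "0 \<le> K" "K0 \<le> K" unfolding K_def by auto
  obtain c2 where c2: "0 < c2" "\<And>c. 0 \<le> c \<Longrightarrow> c \<le> c2 \<Longrightarrow> K * c powr \<delta> \<le> 1 / 2"
    using powr_small_bound[OF K(1) _ assms(3), of "1 / 2"] by auto
  have "0 < min c0 c2" using assms(1) c2(1) by simp
  moreover have "Dnorm_approx \<delta> K (min c0 c2)"
    using Dnorm_approx_mono[OF assms(2) _ K(2)] by simp
  ultimately show thesis using that K(1) c2(2)[of "min c0 c2"] by simp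
qed

lemma Dnorm_approx_half:
  assumes "Dnorm_approx \<delta> K c1" "0 \<le> K" "0 \<le> \<delta>" "K * c1 powr \<delta> \<le> 1 / 2"
    and g: "g \<in> Eneg" "0 < supnorm g" "supnorm g \<le> c1"
  shows "\<bar>prob_le M Y g - (1 - Dnorm N Z g)\<bar> \<le> Dnorm N Z g / 2"
proof -
  have "K * supnorm g powr \<delta> \<le> 1 / 2"
    using assms powr_mono2[of \<delta> "supnorm g" c1] mult_left_mono[of _ _ K] by force
  then have "K * supnorm g powr \<delta> * Dnorm N Z g \<le> Dnorm N Z g / 2"
    using mult_right_mono[OF _ Dnorm_nonneg[OF g(1)]] by fastforce
  then show ?thesis using assms unfolding Dnorm_approx_def by force
qed

subsection \<open>Rates of convergence of maxima\<close>

lemma max_approx_small_scale: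
  assumes approx: "Dnorm_approx \<delta> K c1" "0 \<le> K" "K * c1 powr \<delta> \<le> 1 / 2"
    and \<delta>: "0 < \<delta>" "\<delta> \<le> 1"
    and g: "g \<in> Eneg" "0 < supnorm g" "supnorm g / real n \<le> c1" and n: "2 \<le> n"
  shows "\<bar>prob_le M Y (\<lambda>t. g t / real n) ^ n - exp (- Dnorm N Z g)\<bar>
           \<le> 68 * (K + 1 / 2) * real n powr (- \<delta>)"
proof -
  define x where "x = Dnorm N Z g"
  define c where "c = supnorm g / real n"
  have x: "supnorm g \<le> x" unfolding x_def using supnorm_le_Dnorm[OF g(1)] .
  have h: "(\<lambda>t. g t / real n) \<in> Eneg" "supnorm (\<lambda>t. g t / real n) = c"
    unfolding c_def using g n Eneg_divide supnorm_divide unfolding Eneg_def by auto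
  have Dh: "Dnorm N Z (\<lambda>t. g t / real n) = x / real n"
    unfolding x_def using Dnorm_divide_nat[OF g(1)] n by simp
  have c: "0 < c" "c \<le> c1" unfolding c_def using g n by auto
  have "K * c powr \<delta> \<le> 1 / 2"
    using approx c \<delta> powr_mono2[of \<delta> c c1] mult_left_mono[of _ _ K] by force
  moreover have "\<bar>prob_le M Y (\<lambda>t. g t / real n) - (1 - x / real n)\<bar> \<le> K * c powr \<delta> * (x / real n)"
    using approx(1) h c Dh unfolding Dnorm_approx_def by force
  ultimately have "\<bar>prob_le M Y (\<lambda>t. g t / real n) ^ n - exp (- (real n * (x / real n)))\<bar>
      \<le> real n * exp (- (real n * (x / real n)) / 4) * (K * c powr \<delta> * (x / real n) + (x / real n)\<^sup>2 / 2)"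
    using n x g(2) prob_le_nonneg by (intro power_approx_from_linear) auto
  also have "\<dots> = exp (- x / 4) * (K * c powr \<delta> * x + x\<^sup>2 / (2 * real n))"
    using n by (simp add: field_simps power2_eq_square)
  also have "\<dots> \<le> 68 * (K + 1 / 2) * real n powr (- \<delta>)"
  proof (rule rate_polynomial_exp_bound)
    have "c powr \<delta> = supnorm g powr \<delta> * real n powr (- \<delta>)"
      unfolding c_def using g(2) n by (simp add: powr_divide powr_minus_divide)
    also have "\<dots> \<le> (1 + x) * real n powr (- \<delta>)"
      using powr_le_one_plus[of "supnorm g" \<delta>] g(2) \<delta> x by (intro mult_right_mono) auto
    finally show "c powr \<delta> \<le> (1 + x) * real n powr (- \<delta>)" .
  qed (use n \<delta> approx(2) x g(2) in auto)
  finally show ?thesis using n unfolding x_def by simp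
qed

lemma prob_le_large_scale_bound:
  assumes approx: "Dnorm_approx \<delta> K c1" "0 \<le> K" "0 \<le> \<delta>" "K * c1 powr \<delta> \<le> 1 / 2"
    and c: "0 < c" "c \<le> c1" "\<And>h. h \<in> Eneg \<Longrightarrow> supnorm h = c \<Longrightarrow> Dnorm N Z h \<le> 1 / 3"
    and g: "g \<in> Eneg" "c \<le> supnorm g / real n" and n: "1 \<le> n"
  shows "prob_le M Y (\<lambda>t. g t / real n) \<le> 1 - c / 2"
proof -
  define s where "s = supnorm g"
  have "c * real n \<le> s" using g n unfolding s_def by (simp add: field_simps)
  moreover have "0 < c * real n" using c n by simp
  ultimately have s: "0 < s" "c * real n \<le> s" by auto
  define h where "h = (\<lambda>t. c / s * g t)"
  have h: "h \<in> Eneg" "supnorm h = c"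
  proof -
    show "h \<in> Eneg" unfolding h_def using Eneg_cmult[OF g(1), of "c / s"] s c by simp
    have "supnorm h = c / s * s"
      unfolding h_def s_def using supnorm_cmult[of g "c / s"] g s c unfolding Eneg_def s_def by simp
    then show "supnorm h = c" using s by simp
  qed
  have "\<bar>prob_le M Y h - (1 - Dnorm N Z h)\<bar> \<le> Dnorm N Z h / 2"
    using Dnorm_approx_half[OF approx] h c by auto
  moreover have "c \<le> Dnorm N Z h" "Dnorm N Z h \<le> 1 / 3"
    using supnorm_le_Dnorm[OF h(1)] h c(3)[OF h] by auto
  ultimately have A: "0 < prob_le M Y h" "prob_le M Y h \<le> 1 - c / 2"
    unfolding abs_le_iff by linarith+
  have "g t / real n \<le> h t" if t: "t \<in> {0..1}" for t
  proof -
    have "g t \<le> 0" using g t unfolding Eneg_def by auto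
    moreover have "c / s \<le> 1 / real n" using s n by (simp add: field_simps)
    ultimately show ?thesis unfolding h_def using mult_right_mono_neg by fastforce
  qed
  then have "prob_le M Y (\<lambda>t. g t / real n) \<le> prob_le M Y h"
    using A(1) prob_space_M by (intro prob_le_mono) auto
  then show ?thesis using A(2) by simp
qed

lemma max_approx_large_scale:
  assumes approx: "Dnorm_approx \<delta> K c1" "0 \<le> K" "0 \<le> \<delta>" "K * c1 powr \<delta> \<le> 1 / 2"
    and c: "0 < c" "c \<le> c1" "\<And>h. h \<in> Eneg \<Longrightarrow> supnorm h = c \<Longrightarrow> Dnorm N Z h \<le> 1 / 3"
    and g: "g \<in> Eneg" "c \<le> supnorm g / real n" and n: "1 \<le> n"
  shows "\<bar>prob_le M Y (\<lambda>t. g t / real n) ^ n - exp (- Dnorm N Z g)\<bar> \<le> 2 / (c * real n)"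
proof -
  have P: "prob_le M Y (\<lambda>t. g t / real n) \<le> 1 - c / 2"
    by (rule prob_le_large_scale_bound[OF approx c g n])
  then have "prob_le M Y (\<lambda>t. g t / real n) ^ n \<le> (1 - c / 2) ^ n"
    by (intro power_mono) auto
  also have "\<dots> \<le> exp (- c / 2) ^ n"
    using exp_ge_add_one_self[of "- c / 2"] order_trans[OF prob_le_nonneg P]
    by (intro power_mono) auto
  finally have an: "prob_le M Y (\<lambda>t. g t / real n) ^ n \<le> exp (- (c * real n / 2))"
    by (simp add: mult.commute flip: exp_of_nat_mult)
  have "c * real n \<le> supnorm g" "0 < c * real n" using g n c by (simp_all add: field_simps)
  then have "exp (- Dnorm N Z g) \<le> exp (- (c * real n / 2))"
    using supnorm_le_Dnorm[OF g(1)] by simp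
  moreover have "0 \<le> prob_le M Y (\<lambda>t. g t / real n) ^ n" by simp
  ultimately have "\<bar>prob_le M Y (\<lambda>t. g t / real n) ^ n - exp (- Dnorm N Z g)\<bar>
      \<le> exp (- (c * real n / 2))"
    using an exp_gt_zero[of "- Dnorm N Z g"] unfolding abs_le_iff by linarith
  also have "\<dots> \<le> 2 / (c * real n)"
    using exp_minus_le_inverse[of "c * real n / 2"] c n by simp
  finally show ?thesis .
qed

lemma Dnorm_small_level:
  assumes "0 < c1"
  obtains c where "0 < c" "c \<le> c1" "\<And>h. h \<in> Eneg \<Longrightarrow> supnorm h = c \<Longrightarrow> Dnorm N Z h \<le> 1 / 3"
proof -
  obtain C where C: "\<And>g. g \<in> Eneg \<Longrightarrow> supnorm g \<le> 1 \<Longrightarrow> Dnorm N Z g \<le> C"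
    using Dnorm_bounded by blast
  define m where "m = nat \<lceil>max (1 / c1) (3 * C)\<rceil> + 1"
  have m: "1 \<le> m" "1 / c1 \<le> real m" "3 * C \<le> real m" unfolding m_def by linarith+
  show thesis
  proof (rule that[of "1 / real m"])
    show "0 < 1 / real m" "1 / real m \<le> c1" using m assms by (auto simp: field_simps)
    fix h assume h: "h \<in> Eneg" "supnorm h = 1 / real m"
    have g: "(\<lambda>t. real m * h t) \<in> Eneg" "supnorm (\<lambda>t. real m * h t) = 1"
      using h m Eneg_cmult[OF h(1)] supnorm_cmult[of h "real m"] unfolding Eneg_def by auto
    have "Dnorm N Z h = Dnorm N Z (\<lambda>t. real m * h t) / real m"
      using Dnorm_divide_nat[OF g(1) m(1)] m by simp
    also have "\<dots> \<le> C / real m" using C[OF g(1)] g m by (simp add: divide_right_mono)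
    also have "\<dots> \<le> 1 / 3" using m by (simp add: field_simps)
    finally show "Dnorm N Z h \<le> 1 / 3" .
  qed
qed

lemma max_approx_all_scales:
  assumes approx: "Dnorm_approx \<delta> K c1" "0 \<le> K" "K * c1 powr \<delta> \<le> 1 / 2"
    and \<delta>: "0 < \<delta>" "\<delta> \<le> 1"
    and c: "0 < c" "c \<le> c1" "\<And>h. h \<in> Eneg \<Longrightarrow> supnorm h = c \<Longrightarrow> Dnorm N Z h \<le> 1 / 3"
    and R: "68 * (K + 1 / 2) \<le> R" "2 / c \<le> R"
    and n: "2 \<le> n" and g: "g \<in> Eneg"
  shows "\<bar>prob_le M Y (\<lambda>t. g t / real n) ^ n - prob_le ME eta g\<bar> \<le> R * real n powr (- \<delta>)"
proof -
  have "0 \<le> R" using R(2) c(1) by (smt (verit) divide_pos_pos)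
  have r: "1 / real n \<le> real n powr (- \<delta>)"
    using n \<delta> inverse_le_powr_minus[of "real n" \<delta>] by auto
  have bound_small: "68 * (K + 1 / 2) * real n powr (- \<delta>) \<le> R * real n powr (- \<delta>)"
    using R by (intro mult_right_mono) auto
  have "2 / (c * real n) = 2 / c * (1 / real n)" by simp
  also have "\<dots> \<le> R * real n powr (- \<delta>)"
    using R r c(1) \<open>0 \<le> R\<close> by (intro mult_mono) auto
  finally have bound_large: "2 / (c * real n) \<le> R * real n powr (- \<delta>)" .
  have "0 \<le> supnorm g" using supnorm_nonneg g unfolding Eneg_def by simp
  have eta_g: "prob_le ME eta g = exp (- Dnorm N Z g)" using eta_df g by simp
  consider "supnorm g = 0" | "0 < supnorm g" "supnorm g / real n \<le> c" | "c \<le> supnorm g / real n"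
    using \<open>0 \<le> supnorm g\<close> by (metis linorder_le_cases order_le_less)
  then show ?thesis
  proof cases
    case 1
    then have "prob_le M Y (\<lambda>t. g t / real n) = 1" "prob_le ME eta g = 1"
      using g supnorm_eq_0D max_stable unfolding std_max_stable_def
      by (auto intro!: prob_le_eq_1[OF Y] prob_le_eq_1)
    moreover have "0 \<le> R * real n powr (- \<delta>)" using \<open>0 \<le> R\<close> by simp
    ultimately show ?thesis by simp
  next
    case 2
    then have "supnorm g / real n \<le> c1" using c(2) by simp
    from max_approx_small_scale[OF approx \<delta> g 2(1) this n]
    show ?thesis unfolding eta_g using bound_small by (rule order_trans)
  next
    case 3
    have "0 \<le> \<delta>" "1 \<le> n" using \<delta> n by auto
    from max_approx_large_scale[OF approx(1,2) this(1) approx(3) c g 3 this(2)]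
    show ?thesis unfolding eta_g using bound_large by (rule order_trans)
  qed
qed

lemma spectral_nbhd_imp_max_rate:
  assumes "spectral_nbhd M Y MV V \<delta>" and \<delta>: "0 < \<delta>" "\<delta> \<le> 1"
  shows "max_rate M Y ME eta \<delta>"
proof -
  obtain K c1 where approx: "Dnorm_approx \<delta> K c1" "0 \<le> K" "K * c1 powr \<delta> \<le> 1 / 2"
    and "0 < c1"
    using spectral_nbhd_imp_Dnorm_approx[OF assms(1)] Dnorm_approx_tighten[OF _ _ \<delta>(1)] by metis
  obtain c where c: "0 < c" "c \<le> c1" "\<And>h. h \<in> Eneg \<Longrightarrow> supnorm h = c \<Longrightarrow> Dnorm N Z h \<le> 1 / 3"
    using Dnorm_small_level[OF \<open>0 < c1\<close>] by blast
  show ?thesis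
    unfolding max_rate_def eventually_sequentially
    using max_approx_all_scales[OF approx \<delta> c, of "max (68 * (K + 1 / 2)) (2 / c)"] by auto
qed

lemma Dnorm_approx_at_scale:
  assumes rate: "\<And>n f. N1 \<le> n \<Longrightarrow> f \<in> Eneg \<Longrightarrow>
        \<bar>prob_le M Y (\<lambda>t. f t / real n) ^ n - prob_le ME eta f\<bar> \<le> K * real n powr (- \<delta>)"
    and K: "0 \<le> K" and \<delta>: "0 < \<delta>" "\<delta> \<le> 1"
    and C: "\<And>h. h \<in> Eneg \<Longrightarrow> supnorm h \<le> 2 \<Longrightarrow> Dnorm N Z h \<le> C"
    and g: "g \<in> Eneg" "0 < supnorm g" "supnorm g \<le> 1 / (real N1 + 1)"
    and small: "K * supnorm g powr \<delta> \<le> exp (- C) / 2"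
  shows "\<bar>prob_le M Y g - (1 - Dnorm N Z g)\<bar>
           \<le> (2 * exp C * K + C / 2) * supnorm g powr \<delta> * Dnorm N Z g"
proof -
  define s where "s = supnorm g"
  have "s * (real N1 + 1) \<le> 1" "s * 1 \<le> s * (real N1 + 1)"
    using g unfolding s_def by (auto simp: field_simps)
  then have s: "0 < s" "s \<le> 1" using g(2) unfolding s_def by linarith+
  then obtain n where n: "1 \<le> n" "1 / s \<le> real n" "1 / real n \<le> s"
    and h: "(\<lambda>t. real n * g t) \<in> Eneg" "supnorm (\<lambda>t. real n * g t) \<le> 2"
    using Eneg_nat_multiple[OF g(1)] unfolding s_def by blast
  have "real N1 + 1 \<le> 1 / s" using g s unfolding s_def by (simp add: field_simps)
  then have "N1 \<le> n" using n(2) by linarith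
  define y where "y = Dnorm N Z g"
  have y: "s \<le> y" "real n * y = Dnorm N Z (\<lambda>t. real n * g t)"
    unfolding y_def s_def using supnorm_le_Dnorm[OF g(1)] Dnorm_divide_nat[OF h(1) n(1)] n
    by auto
  have "K * real n powr (- \<delta>) \<le> K * s powr \<delta>"
    using n s \<delta> K powr_mono2[of \<delta> "1 / real n" s]
    by (intro mult_left_mono) (auto simp: powr_minus_divide powr_divide)
  then have "\<bar>prob_le M Y g ^ n - exp (- (real n * y))\<bar> \<le> K * s powr \<delta>"
    using rate[OF \<open>N1 \<le> n\<close> h(1)] eta_df h y(2) n(1) by simp
  then have "\<bar>prob_le M Y g - (1 - y)\<bar> \<le> 2 * exp C * (K * s powr \<delta>) / real n + y\<^sup>2 / 2"
    using y s n(1) C[OF h] small unfolding s_def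
    by (intro linear_approx_from_power) auto
  also have "\<dots> \<le> (2 * exp C * K + C / 2) * s powr \<delta> * y"
    using s n y K \<delta> C[OF h] by (intro linear_rate_bound) auto
  finally show ?thesis unfolding y_def s_def .
qed

lemma max_rate_imp_spectral_nbhd:
  assumes "max_rate M Y ME eta \<delta>" and \<delta>: "0 < \<delta>" "\<delta> \<le> 1"
  shows "spectral_nbhd M Y MV V \<delta>"
proof -
  obtain K0 N1 where rate0: "\<And>n f. N1 \<le> n \<Longrightarrow> f \<in> Eneg \<Longrightarrow>
      \<bar>prob_le M Y (\<lambda>t. f t / real n) ^ n - prob_le ME eta f\<bar> \<le> K0 * real n powr (- \<delta>)"
    using assms(1) unfolding max_rate_def eventually_sequentially by blast
  define K where "K = \<bar>K0\<bar>"
  have K: "0 \<le> K" unfolding K_def by simp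
  have rate: "\<bar>prob_le M Y (\<lambda>t. f t / real n) ^ n - prob_le ME eta f\<bar> \<le> K * real n powr (- \<delta>)"
    if "N1 \<le> n" "f \<in> Eneg" for n f
  proof -
    have "K0 * real n powr (- \<delta>) \<le> K * real n powr (- \<delta>)"
      unfolding K_def by (intro mult_right_mono) auto
    then show ?thesis using rate0[OF that] by linarith
  qed
  obtain C where C: "\<And>h. h \<in> Eneg \<Longrightarrow> supnorm h \<le> 2 \<Longrightarrow> Dnorm N Z h \<le> C"
    using Dnorm_bounded by blast
  obtain c2 where c2: "0 < c2" "\<And>c. 0 \<le> c \<Longrightarrow> c \<le> c2 \<Longrightarrow> K * c powr \<delta> \<le> exp (- C) / 2"
    using powr_small_bound[OF K _ \<delta>(1), of "exp (- C) / 2"] by auto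
  define c1 where "c1 = min c2 (1 / (real N1 + 1))"
  have "0 < c1" unfolding c1_def using c2(1) by simp
  moreover have "Dnorm_approx \<delta> (2 * exp C * K + C / 2) c1"
    unfolding Dnorm_approx_def c1_def
    using Dnorm_approx_at_scale[OF rate K \<delta> C] c2(2) by auto
  ultimately show ?thesis by (rule Dnorm_approx_imp_spectral_nbhd)
qed

end

theorem mainTheorem10:
  fixes M :: "'a measure" and Y :: "'a \<Rightarrow> real \<Rightarrow> real"
    and MV :: "'c measure" and V :: "'c \<Rightarrow> real \<Rightarrow> real"
    and ME :: "'d measure" and eta :: "'d \<Rightarrow> real \<Rightarrow> real"
    and N :: "'b measure" and Z :: "'b \<Rightarrow> real \<Rightarrow> real"
  assumes Y: "Cneg_process M Y"
    and Z: "generator N Z"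
    and V: "std_GPP MV V N Z"
    and eta: "std_max_stable ME eta"
    and eta_df: "\<forall>f\<in>Eneg. prob_le ME eta f = exp (- Dnorm N Z f)"
  shows "(\<forall>\<delta>. 0 < \<delta> \<and> \<delta> \<le> 1 \<longrightarrow> spectral_nbhd M Y MV V \<delta> \<longrightarrow> max_rate M Y ME eta \<delta>) \<and>
         (von_mises M Y \<longrightarrow>
           (\<forall>\<delta>. 0 < \<delta> \<and> \<delta> \<le> 1 \<longrightarrow> max_rate M Y ME eta \<delta> \<longrightarrow> spectral_nbhd M Y MV V \<delta>))"
proof -
  interpret GPP_domain M Y MV V N Z ME eta
    using Y V eta eta_df by unfold_locales
  show ?thesis
    using spectral_nbhd_imp_max_rate max_rate_imp_spectral_nbhd by blast
qed

end
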